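(* Let $q(t)=t^2\log(t^2)$ for $t>0$ and, for an integer $k\ge2$, let $p^{2k-1}_{\mathrm{Tay}}$ be the Taylor polynomial of $q$ of order $2k-1$ about $t=1$. Then $p^{2k-1}_{\mathrm{Tay}}(t)\ge q(t)$ for all $t>0$. *)

theory Defs
  imports "HOL-Analysis.Analysis"
begin

definition q :: "real \<Rightarrow> real" where
  "q t = t\<^sup>2 * ln (t\<^sup>2)"

definition taylor_poly :: "(real \<Rightarrow> real) \<Rightarrow> nat \<Rightarrow> real \<Rightarrow> real \<Rightarrow> real" where
  "taylor_poly f n a t = (\<Sum>j\<le>n. (deriv ^^ j) f a / fact j * (t - a) ^ j)"

end

theory Submission
  imports Defs
begin

text \<open>
  On \<open>t > 0\<close> we have \<open>q t = 2 t\<^sup>2 ln t\<close>, whose derivatives of order \<open>m = j + 3\<close>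
  are \<open>4 (-1)\<^sup>j j! / t\<^bsup>j+1\<^esub>\<close>. In particular every derivative of even order \<open>2k \<ge> 4\<close>
  is negative, so the Lagrange remainder \<open>q\<^bsup>(2k)\<^esub>(\<xi>) (t - 1)\<^bsup>2k\<^esub> / (2k)!\<close> of the
  Taylor expansion of order \<open>2k - 1\<close> about \<open>1\<close> is nonpositive.
\<close>

lemma Taylor_ge_of_even_nonpos_remainder:
  fixes D :: "nat \<Rightarrow> real \<Rightarrow> real" and a x :: real
  assumes "even n" "n > 0"
    and "\<And>m y. m < n \<Longrightarrow> min a x \<le> y \<Longrightarrow> y \<le> max a x \<Longrightarrow>
      (D m has_real_derivative D (Suc m) y) (at y)"
    and nonpos: "\<And>y. min a x \<le> y \<Longrightarrow> y \<le> max a x \<Longrightarrow> D n y \<le> 0"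
  shows "D 0 x \<le> (\<Sum>m<n. D m a / fact m * (x - a) ^ m)"
proof (cases "x = a")
  case True
  from \<open>n > 0\<close> obtain n' where "n = Suc n'" using gr0_conv_Suc by blast
  then show ?thesis using True by (simp add: sum.lessThan_Suc_shift del: sum.lessThan_Suc)
next
  case False
  obtain \<xi> where between: "if x < a then x < \<xi> \<and> \<xi> < a else a < \<xi> \<and> \<xi> < x"
    and expansion: "D 0 x = (\<Sum>m<n. D m a / fact m * (x - a) ^ m) + D n \<xi> / fact n * (x - a) ^ n"
    using Taylor[of n D "D 0" "min a x" "max a x" a x] assms False by auto
  from between have \<xi>: "min a x \<le> \<xi>" "\<xi> \<le> max a x"
    by (auto split: if_splits)
  have "D n \<xi> / fact n * (x - a) ^ n \<le> 0"
    using nonpos[OF \<xi>] \<open>even n\<close>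
    by (intro mult_nonpos_nonneg divide_nonpos_pos) (auto simp: zero_le_even_power)
  with expansion show ?thesis by linarith
qed

fun q_deriv :: "nat \<Rightarrow> real \<Rightarrow> real" where
  "q_deriv 0 x = 2 * x\<^sup>2 * ln x"
| "q_deriv (Suc 0) x = 4 * x * ln x + 2 * x"
| "q_deriv (Suc (Suc 0)) x = 4 * ln x + 6"
| "q_deriv (Suc (Suc (Suc j))) x = 4 * (-1) ^ j * fact j / x ^ Suc j"

lemma q_deriv_has_real_derivative:
  assumes "x > 0"
  shows "(q_deriv m has_real_derivative q_deriv (Suc m) x) (at x)"
proof (cases "m \<ge> 3")
  case True
  define j where "j = m - 3"
  have m: "m = Suc (Suc (Suc j))" using True by (simp add: j_def)
  have "((\<lambda>x. 4 * (-1) ^ j * fact j / x ^ Suc j) has_real_derivative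
      - (4 * (-1) ^ j * fact j * (real (Suc j) * x ^ j)) / (x ^ Suc j)\<^sup>2) (at x)"
    using assms by (auto intro!: derivative_eq_intros simp: power2_eq_square simp del: power_Suc)
  moreover have "- (4 * (-1) ^ j * fact j * (real (Suc j) * x ^ j)) / (x ^ Suc j)\<^sup>2
      = 4 * (-1) ^ Suc j * fact (Suc j) / x ^ Suc (Suc j)"
    using assms by (simp add: field_simps power2_eq_square)
  moreover have "q_deriv m = (\<lambda>x. 4 * (-1) ^ j * fact j / x ^ Suc j)"
    using m by (simp add: fun_eq_iff del: power_Suc)
  ultimately show ?thesis using m by (simp del: power_Suc fact_Suc)
next
  case False
  then consider "m = 0" | "m = 1" | "m = 2" by linarith
  then show ?thesis
  proof cases
    case 1
    then have "q_deriv m = (\<lambda>x. 2 * x\<^sup>2 * ln x)" by (simp add: fun_eq_iff)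
    then show ?thesis
      using 1 assms by (auto intro!: derivative_eq_intros simp: power2_eq_square field_simps)
  next
    case 2
    then have "q_deriv m = (\<lambda>x. 4 * x * ln x + 2 * x)" by (simp add: fun_eq_iff)
    then show ?thesis
      using 2 assms by (auto intro!: derivative_eq_intros simp: field_simps)
  next
    case 3
    then have "q_deriv m = (\<lambda>x. 4 * ln x + 6)" by (simp add: fun_eq_iff numeral_2_eq_2)
    then show ?thesis
      using 3 assms by (auto intro!: derivative_eq_intros simp: numeral_2_eq_2 numeral_3_eq_3)
  qed
qed

lemma higher_deriv_q:
  "x > 0 \<Longrightarrow> (deriv ^^ m) q x = q_deriv m x"
proof (induction m arbitrary: x)
  case 0
  then show ?case by (simp add: q_def ln_mult power2_eq_square)
next
  case (Suc m)
  have "((deriv ^^ m) q has_real_derivative q_deriv (Suc m) x) (at x)"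
    by (rule has_field_derivative_transform_within_open[where f = "q_deriv m" and S = "{0<..}"])
      (use Suc q_deriv_has_real_derivative in auto)
  then show ?case by (simp add: DERIV_imp_deriv)
qed

lemma q_deriv_even_neg:
  assumes "even m" "m \<ge> 4" "x > 0"
  shows "q_deriv m x < 0"
proof -
  define j where "j = m - 3"
  have "m = Suc (Suc (Suc j))" "odd j" using assms(1,2) by (auto simp: j_def)
  then show ?thesis using assms(3) by simp
qed

theorem mainTheorem11:
  fixes k :: nat and t :: real
  assumes "k \<ge> 2" and "t > 0"
  shows "taylor_poly q (2 * k - 1) 1 t \<ge> q t"
proof -
  have "taylor_poly q (2 * k - 1) 1 t = (\<Sum>m<2 * k. q_deriv m 1 / fact m * (t - 1) ^ m)"
    unfolding taylor_poly_def using assms(1)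
    by (intro sum.cong) (auto simp: higher_deriv_q)
  moreover have "q t = q_deriv 0 t"
    using higher_deriv_q[of t 0] assms(2) by simp
  moreover have "q_deriv 0 t \<le> (\<Sum>m<2 * k. q_deriv m 1 / fact m * (t - 1) ^ m)"
    using assms
    by (intro Taylor_ge_of_even_nonpos_remainder)
      (auto intro!: q_deriv_has_real_derivative less_imp_le[OF q_deriv_even_neg])
  ultimately show ?thesis by simp
qed

end
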